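(* Let $\lambda\in[0,1]$. For every $\alpha$ with $1\le\alpha<\frac{\sqrt{\lambda^2-2\lambda+5}-\lambda+1}{2}$, there exists an instance with the weighted single metric loss with parameter $\lambda$ in which no clustering is in the $\alpha$-core.
   Context: Instance: finite nonempty set $\mathcal{N}$ of $n$ agents, finite nonempty set $\mathcal{M}$ of feasible centers, positive integer $k$, pseudometric $d$ on $\mathcal{N}\cup\mathcal{M}$. Weighted single metric loss: $\ell_i(C,x)=\lambda\max_{j\in C}d(i,j)+(1-\lambda)d(i,x)$ for $i\in C\subseteq\mathcal{N}$, $x\in\mathcal{M}$. A clustering is $\mathcal{X}=\{(C_1,x_1),\dots,(C_k,x_k)\}$ with $C_t$ pairwise disjoint (some possibly empty), union $\mathcal{N}$, $x_t\in\mathcal{M}$; $\ell_i(\mathcal{X})=\ell_i(C_t,x_t)$ where $i\in C_t$. For $\alpha\ge1$, $\mathcal{X}$ is in the $\alpha$-core if there is no $S\subseteq\mathcal{N}$ with $|S|\ge n/k$ and $y\in\mathcal{M}$ with $\alpha\,\ell_i(S,y)<\ell_i(\mathcal{X})$ for all $i\in S$. *)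

theory Defs
  imports Complex_Main
begin

definition pseudometric_on :: "'a set \<Rightarrow> ('a \<Rightarrow> 'a \<Rightarrow> real) \<Rightarrow> bool" where
  "pseudometric_on A d \<longleftrightarrow>
     (\<forall>x\<in>A. d x x = 0) \<and>
     (\<forall>x\<in>A. \<forall>y\<in>A. d x y \<ge> 0 \<and> d x y = d y x) \<and>
     (\<forall>x\<in>A. \<forall>y\<in>A. \<forall>z\<in>A. d x z \<le> d x y + d y z)"

definition wsm_loss :: "real \<Rightarrow> ('a \<Rightarrow> 'a \<Rightarrow> real) \<Rightarrow> 'a set \<Rightarrow> 'a \<Rightarrow> 'a \<Rightarrow> real" where
  "wsm_loss lam d C x i = lam * Max ((\<lambda>j. d i j) ` C) + (1 - lam) * d i x"

definition is_clustering :: "'a set \<Rightarrow> 'a set \<Rightarrow> nat \<Rightarrow> (nat \<Rightarrow> 'a set) \<Rightarrow> (nat \<Rightarrow> 'a) \<Rightarrow> bool" where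
  "is_clustering N M k C X \<longleftrightarrow>
     (\<forall>t<k. \<forall>s<k. t \<noteq> s \<longrightarrow> C t \<inter> C s = {}) \<and>
     (\<Union>t<k. C t) = N \<and>
     (\<forall>t<k. X t \<in> M)"

definition clustering_loss ::
  "real \<Rightarrow> ('a \<Rightarrow> 'a \<Rightarrow> real) \<Rightarrow> nat \<Rightarrow> (nat \<Rightarrow> 'a set) \<Rightarrow> (nat \<Rightarrow> 'a) \<Rightarrow> 'a \<Rightarrow> real" where
  "clustering_loss lam d k C X i =
     (let t = (THE t. t < k \<and> i \<in> C t) in wsm_loss lam d (C t) (X t) i)"

definition in_alpha_core ::
  "real \<Rightarrow> ('a \<Rightarrow> 'a \<Rightarrow> real) \<Rightarrow> 'a set \<Rightarrow> 'a set \<Rightarrow> nat \<Rightarrow> real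
     \<Rightarrow> (nat \<Rightarrow> 'a set) \<Rightarrow> (nat \<Rightarrow> 'a) \<Rightarrow> bool" where
  "in_alpha_core lam d N M k alpha C X \<longleftrightarrow>
     is_clustering N M k C X \<and>
     \<not> (\<exists>S y. S \<subseteq> N \<and> real (card S) \<ge> real (card N) / real k \<and> y \<in> M \<and>
            (\<forall>i\<in>S. alpha * wsm_loss lam d S y i < clustering_loss lam d k C X i))"

end

theory Submission
  imports Defs
begin

(* The instance consists of two far-apart copies of a gadget with three agents and three
   centres, and k = 3, so that any two agents form a large enough coalition. In a copy,
   agent i is at distance 1 from centre i, t from centre i - 1 and 2 + t from centre i + 1
   (mod 3); other pairs within a copy are 1 + t apart. With only three clusters, some copy
   contains the centre of at most one of them. If two agents of that copy are served from
   the other copy, they deviate to a local centre. Otherwise two of them share the cluster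
   of the local centre j, and agents j + 1 and j + 2 deviate to centre j + 1, moving from
   distance t to 1 and from 2 + t to t. For a suitable t \<ge> 1 all these deviations gain a
   factor alpha as long as alpha^2 + (lam - 1) alpha < 1, which is the assumed bound. *)

(* The bound on alpha is the positive root of alpha^2 + (lam - 1) alpha - 1. *)
lemma quadratic_bound_of_alpha_bound:
  fixes lam alpha :: real
  assumes "0 \<le> lam" "1 \<le> alpha"
    and "alpha < (sqrt (lam\<^sup>2 - 2 * lam + 5) - lam + 1) / 2"
  shows "alpha\<^sup>2 + (lam - 1) * alpha < 1"
proof -
  have "0 \<le> 2 * alpha + lam - 1" using assms by linarith
  moreover have "2 * alpha + lam - 1 < sqrt (lam\<^sup>2 - 2 * lam + 5)"
    using assms(3) by (simp add: field_simps)
  ultimately have "(2 * alpha + lam - 1)\<^sup>2 < (sqrt (lam\<^sup>2 - 2 * lam + 5))\<^sup>2"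
    by (intro power_strict_mono) auto
  also have "\<dots> = lam\<^sup>2 - 2 * lam + 5"
  proof -
    have "0 \<le> (lam - 1)\<^sup>2" by simp
    then have "0 \<le> lam\<^sup>2 - 2 * lam + 5" by (simp add: power2_eq_square algebra_simps)
    then show ?thesis by simp
  qed
  finally have "(2 * alpha + lam - 1)\<^sup>2 < lam\<^sup>2 - 2 * lam + 5" .
  moreover have "(2 * alpha + lam - 1)\<^sup>2 = 4 * (alpha\<^sup>2 + (lam - 1) * alpha) + lam\<^sup>2 - 2 * lam + 1"
    by (simp add: power2_eq_square algebra_simps)
  ultimately show ?thesis by (simp add: algebra_simps)
qed

lemma lam_less_one_of_quadratic_bound:
  fixes lam alpha :: real
  assumes "1 \<le> alpha" "alpha\<^sup>2 + (lam - 1) * alpha < 1"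
  shows "lam < 1"
proof -
  have "alpha \<le> alpha\<^sup>2" using assms(1) by (simp add: power2_eq_square)
  then have "lam * alpha < 1" using assms(2) by (simp add: algebra_simps)
  then show ?thesis using assms(1) by (smt (verit) mult_le_cancel_right1)
qed

(* The two conditions read (1 - alpha lam) t > alpha - lam and (alpha - 1) t < 2 - lam - alpha lam.
   The quadratic bound makes the gap G between them positive; t is placed just above the lower end. *)
lemma gadget_parameter_exists:
  fixes lam alpha :: real
  assumes lam: "0 \<le> lam" "lam < 1" and alpha: "1 \<le> alpha"
    and quad: "alpha\<^sup>2 + (lam - 1) * alpha < 1"
  shows "\<exists>t\<ge>1. alpha * (1 + lam * t) < lam + t \<and> alpha * (lam + t) < 2 + t - lam"
proof -
  have "alpha \<le> alpha\<^sup>2" using alpha by (simp add: power2_eq_square)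
  then have "lam * alpha < 1" using quad by (simp add: algebra_simps)
  define u where "u = 1 - alpha * lam"
  have u: "0 < u" using \<open>lam * alpha < 1\<close> by (simp add: u_def mult.commute)
  define G where "G = (2 - lam - alpha * lam) * u - (alpha - 1) * (alpha - lam)"
  have "(1 + lam) * (alpha\<^sup>2 + (lam - 1) * alpha) < 1 + lam"
    using quad lam by simp
  moreover have "0 < (1 - lam) * (1 - lam * alpha)" using \<open>lam * alpha < 1\<close> lam by simp
  ultimately have "0 < (1 - lam) * alpha + 2 - (1 + lam) * alpha\<^sup>2"
    by (simp add: power2_eq_square algebra_simps)
  moreover have "G = (1 - lam) * ((1 - lam) * alpha + 2 - (1 + lam) * alpha\<^sup>2)"
    by (simp add: G_def u_def power2_eq_square algebra_simps)
  ultimately have G: "0 < G" using lam by simp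
  define t where "t = (alpha - lam + G / alpha) / u"
  have a0: "0 < alpha" using alpha by simp
  show ?thesis
  proof (intro exI conjI)
    have "u \<le> alpha - lam"
      using mult_left_mono[OF alpha, of lam] lam alpha by (simp add: u_def algebra_simps)
    then have "1 \<le> (alpha - lam) / u" using u by simp
    moreover have "0 < G / alpha / u" using G a0 u by simp
    ultimately show "1 \<le> t" by (simp add: t_def add_divide_distrib)
    have tu: "t * u = alpha - lam + G / alpha" using u by (simp add: t_def)
    then show "alpha * (1 + lam * t) < lam + t"
      using G a0 by (simp add: u_def algebra_simps)
    have "(alpha - 1) * (t * u) = (alpha - 1) * (alpha - lam) + (alpha - 1) * (G / alpha)"
      by (simp add: tu algebra_simps)
    also have "\<dots> < (alpha - 1) * (alpha - lam) + G"
      using G a0 by (simp add: field_simps)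
    also have "\<dots> = (2 - lam - alpha * lam) * u" by (simp add: G_def)
    finally have "(alpha - 1) * t < 2 - lam - alpha * lam"
      using u by (simp add: mult.assoc[symmetric])
    then show "alpha * (lam + t) < 2 + t - lam" by (simp add: algebra_simps)
  qed
qed

definition blocking_coalition ::
  "real \<Rightarrow> ('a \<Rightarrow> 'a \<Rightarrow> real) \<Rightarrow> 'a set \<Rightarrow> 'a set \<Rightarrow> nat \<Rightarrow> real
     \<Rightarrow> (nat \<Rightarrow> 'a set) \<Rightarrow> (nat \<Rightarrow> 'a) \<Rightarrow> 'a set \<Rightarrow> 'a \<Rightarrow> bool" where
  "blocking_coalition lam d N M k alpha C X S y \<longleftrightarrow>
     S \<subseteq> N \<and> real (card S) \<ge> real (card N) / real k \<and> y \<in> M \<and>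
     (\<forall>i\<in>S. alpha * wsm_loss lam d S y i < clustering_loss lam d k C X i)"

lemma in_alpha_core_iff:
  "in_alpha_core lam d N M k alpha C X \<longleftrightarrow>
     is_clustering N M k C X \<and> \<not> (\<exists>S y. blocking_coalition lam d N M k alpha C X S y)"
  by (simp add: in_alpha_core_def blocking_coalition_def)

lemma is_clustering_unique_cluster:
  assumes "is_clustering N M k C X" "\<tau> < k" "\<sigma> < k" "i \<in> C \<tau>" "i \<in> C \<sigma>"
  shows "\<sigma> = \<tau>"
  using assms unfolding is_clustering_def by blast

lemma is_clustering_cluster_subset:
  assumes "is_clustering N M k C X" "\<tau> < k"
  shows "C \<tau> \<subseteq> N"
  using assms unfolding is_clustering_def by blast

lemma is_clustering_center_in:
  assumes "is_clustering N M k C X" "\<tau> < k"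
  shows "X \<tau> \<in> M"
  using assms unfolding is_clustering_def by blast

lemma is_clustering_obtain_cluster:
  assumes "is_clustering N M k C X" "i \<in> N"
  obtains \<tau> where "\<tau> < k" "i \<in> C \<tau>"
  using assms unfolding is_clustering_def by blast

lemma clustering_loss_eq:
  assumes "is_clustering N M k C X" "\<tau> < k" "i \<in> C \<tau>"
  shows "clustering_loss lam d k C X i = wsm_loss lam d (C \<tau>) (X \<tau>) i"
proof -
  have "(THE \<sigma>. \<sigma> < k \<and> i \<in> C \<sigma>) = \<tau>"
    using assms is_clustering_unique_cluster[OF assms(1)] by (intro the_equality) auto
  then show ?thesis by (simp add: clustering_loss_def)
qed

lemma clustering_loss_ge:
  assumes "is_clustering N M k C X" "finite N" "0 \<le> lam"
    and "\<tau> < k" "i \<in> C \<tau>" "b \<in> C \<tau>"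
  shows "lam * d i b + (1 - lam) * d i (X \<tau>) \<le> clustering_loss lam d k C X i"
proof -
  have "finite (C \<tau>)"
    using is_clustering_cluster_subset[OF assms(1,4)] assms(2) by (rule finite_subset)
  then have "d i b \<le> Max (d i ` C \<tau>)" using assms(6) by (intro Max_ge) auto
  then show ?thesis
    using clustering_loss_eq[OF assms(1,4,5)] assms(3)
    by (simp add: wsm_loss_def mult_left_mono)
qed

lemma wsm_loss_pair:
  assumes "d u u = 0" "0 \<le> d u v"
  shows "wsm_loss lam d {u, v} y u = lam * d u v + (1 - lam) * d u y"
  using assms by (simp add: wsm_loss_def max_def)

lemma pair_blocking_coalition:
  assumes "u \<in> N" "v \<in> N" "u \<noteq> v" "y \<in> M" "card N \<le> 2 * k"
    and "d u u = 0" "d v v = 0" "0 \<le> d u v" "d v u = d u v"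
    and "alpha * (lam * d u v + (1 - lam) * d u y) < clustering_loss lam d k C X u"
    and "alpha * (lam * d u v + (1 - lam) * d v y) < clustering_loss lam d k C X v"
  shows "blocking_coalition lam d N M k alpha C X {u, v} y"
  unfolding blocking_coalition_def
proof (intro conjI ballI)
  show "{u, v} \<subseteq> N" "y \<in> M" using assms(1,2,4) by auto
  have "real (card N) / real k \<le> 2"
    using assms(5) by (cases "k = 0") (simp_all add: divide_le_eq)
  then show "real (card N) / real k \<le> real (card {u, v})" using assms(3) by simp
  fix i assume "i \<in> {u, v}"
  then consider "i = u" | "i = v" by blast
  then show "alpha * wsm_loss lam d {u, v} y i < clustering_loss lam d k C X i"
  proof cases
    case 1
    then show ?thesis using wsm_loss_pair[of d u v lam y] assms(6,8,10) by simp
  next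
    case 2
    have "{u, v} = {v, u}" by blast
    then show ?thesis using 2 wsm_loss_pair[of d v u lam y] assms(7-9,11) by simp
  qed
qed

lemma Uniq_less_3_in_one_of_disjoint:
  fixes X :: "nat \<Rightarrow> 'a"
  assumes "P \<inter> Q = {}"
  shows "(\<exists>\<^sub>\<le>\<^sub>1\<tau>. \<tau> < 3 \<and> X \<tau> \<in> P) \<or> (\<exists>\<^sub>\<le>\<^sub>1\<tau>. \<tau> < 3 \<and> X \<tau> \<in> Q)"
proof (rule disjCI)
  assume "\<not> (\<exists>\<^sub>\<le>\<^sub>1\<tau>. \<tau> < 3 \<and> X \<tau> \<in> Q)"
  then obtain c e where ce: "c < 3" "e < 3" "c \<noteq> e" "X c \<in> Q" "X e \<in> Q"
    unfolding Uniq_def by blast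
  show "\<exists>\<^sub>\<le>\<^sub>1\<tau>. \<tau> < 3 \<and> X \<tau> \<in> P"
  proof (rule Uniq_I)
    fix a b assume a: "a < 3 \<and> X a \<in> P" and b: "b < 3 \<and> X b \<in> P"
    have "X a \<notin> Q" "X b \<notin> Q" using a b assms by blast+
    then have "a \<noteq> c" "a \<noteq> e" "b \<noteq> c" "b \<noteq> e" using ce by auto
    then show "b = a" using a b ce(1-3) by arith
  qed
qed

(* Copy s of the gadget occupies the points 6s, ..., 6s + 5, with agents agent s i and centres
   center s j for i, j < 3; points of distinct copies are at distance B. *)
definition agent_center_dist :: "real \<Rightarrow> nat \<Rightarrow> nat \<Rightarrow> real" where
  "agent_center_dist t i j = (if i = j then 1 else if i = Suc j mod 3 then t else 2 + t)"

definition gadget_dist :: "real \<Rightarrow> nat \<Rightarrow> nat \<Rightarrow> real" where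
  "gadget_dist t p q =
     (if p = q then 0
      else if (p < 3) = (q < 3) then 1 + t
      else if p < 3 then agent_center_dist t p (q - 3)
      else agent_center_dist t q (p - 3))"

definition inst_dist :: "real \<Rightarrow> real \<Rightarrow> nat \<Rightarrow> nat \<Rightarrow> real" where
  "inst_dist t B p q = (if p div 6 = q div 6 then gadget_dist t (p mod 6) (q mod 6) else B)"

definition agent :: "nat \<Rightarrow> nat \<Rightarrow> nat" where
  "agent s i = 6 * s + i"

definition center :: "nat \<Rightarrow> nat \<Rightarrow> nat" where
  "center s j = 6 * s + (3 + j)"

definition inst_agents :: "nat set" where
  "inst_agents = {0, 1, 2, 6, 7, 8}"

definition inst_centers :: "nat set" where
  "inst_centers = {3, 4, 5, 9, 10, 11}"

lemma gadget_dist_sym: "gadget_dist t p q = gadget_dist t q p"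
  by (simp add: gadget_dist_def)

lemma agent_center_dist_bounds:
  assumes "1 \<le> t"
  shows "1 \<le> agent_center_dist t i j" "agent_center_dist t i j \<le> 2 + t"
  using assms by (simp_all add: agent_center_dist_def)

lemma gadget_dist_bounds:
  assumes "1 \<le> t"
  shows "0 \<le> gadget_dist t p q" "gadget_dist t p q \<le> 2 + t"
  using agent_center_dist_bounds[OF assms] assms
  by (auto simp: gadget_dist_def intro: order_trans[of 0 1])

lemma gadget_dist_triangle:
  assumes "p < 6" "q < 6" "r < 6" "1 \<le> t"
  shows "gadget_dist t p r \<le> gadget_dist t p q + gadget_dist t q r"
proof -
  have six: "x = 0 \<or> x = 1 \<or> x = 2 \<or> x = 3 \<or> x = 4 \<or> x = 5" if "x < 6" for x :: nat
    using that by auto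
  show ?thesis
    using six[OF assms(1)] six[OF assms(2)] six[OF assms(3)] assms(4)
    by (elim disjE) (simp_all add: gadget_dist_def agent_center_dist_def)
qed

lemma pseudometric_on_inst_dist:
  assumes "1 \<le> t" "2 + t \<le> B"
  shows "pseudometric_on A (inst_dist t B)"
proof -
  have nonneg: "0 \<le> gadget_dist t p q" and le_B: "gadget_dist t p q \<le> B" for p q
    using gadget_dist_bounds[OF assms(1), of p q] assms(2) by linarith+
  have "0 \<le> B" using assms by linarith
  then have le_2B: "gadget_dist t p q \<le> 2 * B" for p q using le_B[of p q] by linarith
  show ?thesis
    unfolding pseudometric_on_def
  proof (intro conjI ballI)
    fix x y z
    show "inst_dist t B x x = 0" by (simp add: inst_dist_def gadget_dist_def)
    show "0 \<le> inst_dist t B x y" "inst_dist t B x y = inst_dist t B y x"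
      using nonneg \<open>0 \<le> B\<close> gadget_dist_sym by (auto simp: inst_dist_def)
    show "inst_dist t B x z \<le> inst_dist t B x y + inst_dist t B y z"
      using nonneg le_B le_2B \<open>0 \<le> B\<close> gadget_dist_triangle[OF _ _ _ assms(1)]
      by (auto simp: inst_dist_def add_increasing add_increasing2)
  qed
qed

lemma agent_div_mod [simp]:
  assumes "i < 3"
  shows "agent s i div 6 = s" "agent s i mod 6 = i"
  using assms by (simp_all add: agent_def)

lemma center_div_mod [simp]:
  assumes "j < 3"
  shows "center s j div 6 = s" "center s j mod 6 = 3 + j"
  using assms by (simp_all add: center_def)

lemma inst_dist_agent_agent [simp]:
  assumes "i < 3" "i' < 3"
  shows "inst_dist t B (agent s i) (agent s' i') = (if s \<noteq> s' then B else if i = i' then 0 else 1 + t)"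
  using assms by (simp add: inst_dist_def gadget_dist_def)

lemma inst_dist_agent_center [simp]:
  assumes "i < 3" "j < 3"
  shows "inst_dist t B (agent s i) (center s' j) = (if s = s' then agent_center_dist t i j else B)"
  using assms by (simp add: inst_dist_def gadget_dist_def)

lemma agent_in_inst_agents: "s \<le> 1 \<Longrightarrow> i < 3 \<Longrightarrow> agent s i \<in> inst_agents"
  by (auto simp: agent_def inst_agents_def le_Suc_eq less_Suc_eq numeral_3_eq_3)

lemma center_in_inst_centers: "s \<le> 1 \<Longrightarrow> j < 3 \<Longrightarrow> center s j \<in> inst_centers"
  by (auto simp: center_def inst_centers_def le_Suc_eq less_Suc_eq numeral_3_eq_3)

lemma inst_agentsE:
  assumes "b \<in> inst_agents"
  obtains s i where "i < 3" "b = agent s i"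
proof (rule that)
  show "b mod 6 < 3" "b = agent (b div 6) (b mod 6)"
    using assms by (auto simp: inst_agents_def agent_def)
qed

lemma inst_centersE:
  assumes "x \<in> inst_centers"
  obtains s j where "j < 3" "x = center s j"
proof (rule that)
  show "x mod 6 - 3 < 3" "x = center (x div 6) (x mod 6 - 3)"
    using assms by (auto simp: inst_centers_def center_def)
qed

lemma card_inst_agents: "card inst_agents = 6"
  by (simp add: inst_agents_def)

locale core_counterexample =
  fixes lam alpha t B :: real
  assumes lam: "0 \<le> lam" "lam \<le> 1" and alpha: "1 \<le> alpha" and t: "1 \<le> t"
    and own_center_gain: "alpha * (lam * (1 + t) + (1 - lam)) < lam * (1 + t) + (1 - lam) * t"
    and next_center_gain:
      "alpha * (lam * (1 + t) + (1 - lam) * t) < lam * (1 + t) + (1 - lam) * (2 + t)"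
    and far_gain: "alpha * (2 + t) < (1 - lam) * B"
begin

abbreviation d :: "nat \<Rightarrow> nat \<Rightarrow> real" where
  "d \<equiv> inst_dist t B"

lemma B_ge_gadget_diameter: "2 + t \<le> B"
proof -
  have "2 + t \<le> alpha * (2 + t)" using alpha t by simp
  also have "\<dots> < (1 - lam) * B" by (rule far_gain)
  finally have less: "2 + t < (1 - lam) * B" .
  have "0 < B"
  proof (rule ccontr)
    assume "\<not> 0 < B"
    then have "(1 - lam) * B \<le> 0" using lam by (simp add: mult_nonneg_nonpos)
    then show False using less t by linarith
  qed
  then have "(1 - lam) * B \<le> B" using lam by (simp add: algebra_simps)
  then show ?thesis using less by linarith
qed

lemma pseudometric: "pseudometric_on (inst_agents \<union> inst_centers) d"
  using pseudometric_on_inst_dist[OF t B_ge_gadget_diameter] .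

lemma gain_over_far_center:
  "alpha * (lam * (1 + t) + (1 - lam) * agent_center_dist t i j) < (1 - lam) * B"
proof -
  have "lam * (1 + t) + (1 - lam) * agent_center_dist t i j \<le> lam * (2 + t) + (1 - lam) * (2 + t)"
    using agent_center_dist_bounds[OF t, of i j] lam
    by (intro add_mono mult_left_mono) auto
  then have "alpha * (lam * (1 + t) + (1 - lam) * agent_center_dist t i j) \<le> alpha * (2 + t)"
    using alpha by (intro mult_left_mono) (auto simp: algebra_simps)
  then show ?thesis using far_gain by linarith
qed

lemma loss_ge_far_center:
  assumes clus: "is_clustering inst_agents inst_centers 3 C X"
    and "\<tau> < 3" "i < 3" "agent s i \<in> C \<tau>" "X \<tau> \<notin> center s ` {..<3}"
  shows "(1 - lam) * B \<le> clustering_loss lam d 3 C X (agent s i)"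
proof -
  obtain s' j where "j < 3" "X \<tau> = center s' j"
    using is_clustering_center_in[OF clus \<open>\<tau> < 3\<close>] by (rule inst_centersE)
  with assms(3,5) have "d (agent s i) (X \<tau>) = B" by auto
  then show ?thesis
    using clustering_loss_ge[OF clus _ lam(1) \<open>\<tau> < 3\<close> assms(4) assms(4), of d] assms(3)
    by (simp add: inst_agents_def)
qed

lemma loss_ge_shared_cluster:
  assumes clus: "is_clustering inst_agents inst_centers 3 C X"
    and "\<tau> < 3" "i < 3" "agent s i \<in> C \<tau>" "b \<in> C \<tau>" "b \<noteq> agent s i"
  shows "lam * (1 + t) + (1 - lam) * d (agent s i) (X \<tau>)
    \<le> clustering_loss lam d 3 C X (agent s i)"
proof -
  obtain s' i' where "i' < 3" "b = agent s' i'"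
    using is_clustering_cluster_subset[OF clus \<open>\<tau> < 3\<close>] assms(5) by (blast elim: inst_agentsE)
  with assms(3,6) B_ge_gadget_diameter have "1 + t \<le> d (agent s i) b" by auto
  then have "lam * (1 + t) \<le> lam * d (agent s i) b" using lam by (simp add: mult_left_mono)
  moreover have "lam * d (agent s i) b + (1 - lam) * d (agent s i) (X \<tau>)
      \<le> clustering_loss lam d 3 C X (agent s i)"
    using clustering_loss_ge[OF clus _ lam(1) assms(2,4,5)] by (simp add: inst_agents_def)
  ultimately show ?thesis by linarith
qed

lemma pair_in_copy_blocks:
  assumes "s \<le> 1" "i < 3" "i' < 3" "i \<noteq> i'" "j < 3"
    and "alpha * (lam * (1 + t) + (1 - lam) * agent_center_dist t i j)
      < clustering_loss lam d 3 C X (agent s i)"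
    and "alpha * (lam * (1 + t) + (1 - lam) * agent_center_dist t i' j)
      < clustering_loss lam d 3 C X (agent s i')"
  shows "\<exists>S y. blocking_coalition lam d inst_agents inst_centers 3 alpha C X S y"
proof -
  have "agent s i \<noteq> agent s i'" using assms(4) by (simp add: agent_def)
  then have "blocking_coalition lam d inst_agents inst_centers 3 alpha C X
      {agent s i, agent s i'} (center s j)"
    using assms t
    by (intro pair_blocking_coalition)
      (auto simp: agent_in_inst_agents center_in_inst_centers card_inst_agents)
  then show ?thesis by blast
qed

lemma far_served_pair_blocks:
  assumes clus: "is_clustering inst_agents inst_centers 3 C X"
    and "s \<le> 1" "i < 3" "i' < 3" "i \<noteq> i'" "\<tau> < 3" "\<tau>' < 3"
    and "agent s i \<in> C \<tau>" "agent s i' \<in> C \<tau>'"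
    and "X \<tau> \<notin> center s ` {..<3}" "X \<tau>' \<notin> center s ` {..<3}"
  shows "\<exists>S y. blocking_coalition lam d inst_agents inst_centers 3 alpha C X S y"
proof (rule pair_in_copy_blocks[OF assms(2-5), of 0])
  show "alpha * (lam * (1 + t) + (1 - lam) * agent_center_dist t i 0)
      < clustering_loss lam d 3 C X (agent s i)"
    using gain_over_far_center loss_ge_far_center[OF clus assms(6,3,8,10)] by (rule less_le_trans)
  show "alpha * (lam * (1 + t) + (1 - lam) * agent_center_dist t i' 0)
      < clustering_loss lam d 3 C X (agent s i')"
    using gain_over_far_center loss_ge_far_center[OF clus assms(7,4,9,11)] by (rule less_le_trans)
qed simp

(* Agents j + 1 and j + 2 deviate to centre j + 1: each of them either is served from the
   other copy or shares the cluster of centre j with another agent. *)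
lemma shared_cluster_rotation_blocks:
  assumes clus: "is_clustering inst_agents inst_centers 3 C X"
    and s: "s \<le> 1" and "\<tau> < 3" "j < 3" "X \<tau> = center s j"
    and "i < 3" "i' < 3" "i \<noteq> i'" "agent s i \<in> C \<tau>" "agent s i' \<in> C \<tau>"
    and sparse: "\<exists>\<^sub>\<le>\<^sub>1\<sigma>. \<sigma> < 3 \<and> X \<sigma> \<in> center s ` {..<3}"
  shows "\<exists>S y. blocking_coalition lam d inst_agents inst_centers 3 alpha C X S y"
proof -
  have loss: "min ((1 - lam) * B) (lam * (1 + t) + (1 - lam) * agent_center_dist t m j)
      \<le> clustering_loss lam d 3 C X (agent s m)" if m: "m < 3" for m
  proof -
    obtain \<sigma> where \<sigma>: "\<sigma> < 3" "agent s m \<in> C \<sigma>"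
      using is_clustering_obtain_cluster[OF clus agent_in_inst_agents[OF s m]] .
    show ?thesis
    proof (cases "X \<sigma> \<in> center s ` {..<3}")
      case True
      moreover have "X \<tau> \<in> center s ` {..<3}" using assms(4,5) by simp
      ultimately have "\<sigma> = \<tau>" using sparse \<sigma>(1) assms(3) by (blast dest: Uniq_D)
      moreover obtain b where "b \<in> C \<tau>" "b \<noteq> agent s m"
        using assms(8-10) by (metis agent_div_mod(2) assms(6,7))
      ultimately have "lam * (1 + t) + (1 - lam) * d (agent s m) (X \<tau>)
          \<le> clustering_loss lam d 3 C X (agent s m)"
        using loss_ge_shared_cluster[OF clus assms(3) m] \<sigma>(2) by blast
      then show ?thesis using assms(4,5) m by simp
    next
      case False
      then show ?thesis using loss_ge_far_center[OF clus \<sigma>(1) m \<sigma>(2)] by simp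
    qed
  qed
  define q where "q = Suc j mod 3"
  define r where "r = Suc q mod 3"
  have qr: "q < 3" "r < 3" "q \<noteq> r" by (auto simp: q_def r_def mod_Suc)
  have "agent_center_dist t q q = 1" "agent_center_dist t q j = t"
    "agent_center_dist t r q = t" "agent_center_dist t r j = 2 + t"
    using assms(4) by (auto simp: q_def r_def agent_center_dist_def mod_Suc)
  then show ?thesis
    using pair_in_copy_blocks[OF s qr qr(1)] loss[OF qr(1)] loss[OF qr(2)]
      gain_over_far_center[of q q] gain_over_far_center[of r q] own_center_gain next_center_gain
    by simp
qed

lemma sparse_copy_blocks:
  assumes clus: "is_clustering inst_agents inst_centers 3 C X"
    and s: "s \<le> 1" and sparse: "\<exists>\<^sub>\<le>\<^sub>1\<sigma>. \<sigma> < 3 \<and> X \<sigma> \<in> center s ` {..<3}"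
  shows "\<exists>S y. blocking_coalition lam d inst_agents inst_centers 3 alpha C X S y"
proof -
  have "\<forall>m. \<exists>\<sigma>. m < 3 \<longrightarrow> \<sigma> < 3 \<and> agent s m \<in> C \<sigma>"
    using is_clustering_obtain_cluster[OF clus agent_in_inst_agents[OF s]] by metis
  then obtain \<sigma> where \<sigma>: "\<And>m. m < 3 \<Longrightarrow> \<sigma> m < 3 \<and> agent s m \<in> C (\<sigma> m)" by metis
  define near where "near m \<longleftrightarrow> X (\<sigma> m) \<in> center s ` {..<3}" for m
  obtain i i' where ii: "i < 3" "i' < 3" "i \<noteq> i'" "near i = near i'"
  proof -
    have "near 0 = near 1 \<or> near 0 = near 2 \<or> near 1 = near 2" by blast
    then show thesis using that[of 0 1] that[of 0 2] that[of 1 2] by auto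
  qed
  show ?thesis
  proof (cases "near i")
    case True
    then obtain j where j: "j < 3" "X (\<sigma> i) = center s j" by (auto simp: near_def)
    have "\<sigma> i' = \<sigma> i" using True ii sparse \<sigma> by (auto simp: near_def dest: Uniq_D)
    then have "agent s i' \<in> C (\<sigma> i)" using \<sigma>[OF ii(2)] by simp
    then show ?thesis using shared_cluster_rotation_blocks[OF clus s _ j ii(1-3) _ _ sparse] \<sigma> ii(1) by simp
  next
    case False
    then have "X (\<sigma> i) \<notin> center s ` {..<3}" "X (\<sigma> i') \<notin> center s ` {..<3}"
      using ii(4) by (simp_all add: near_def)
    then show ?thesis
      using far_served_pair_blocks[OF clus s ii(1-3)] \<sigma>[OF ii(1)] \<sigma>[OF ii(2)] by blast
  qed
qed

lemma not_in_alpha_core: "\<not> in_alpha_core lam d inst_agents inst_centers 3 alpha C X"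
proof
  assume core: "in_alpha_core lam d inst_agents inst_centers 3 alpha C X"
  have "center 0 ` {..<3} \<inter> center 1 ` {..<3} = {}" by (auto simp: center_def)
  then obtain s where "s \<le> 1" "\<exists>\<^sub>\<le>\<^sub>1\<sigma>. \<sigma> < 3 \<and> X \<sigma> \<in> center s ` {..<3}"
    using Uniq_less_3_in_one_of_disjoint[of _ _ X] by (metis le_numeral_extra(4) zero_le_one)
  then have "\<exists>S y. blocking_coalition lam d inst_agents inst_centers 3 alpha C X S y"
    using core by (intro sparse_copy_blocks) (simp_all add: in_alpha_core_iff)
  then show False using core by (simp add: in_alpha_core_iff)
qed

end

theorem mainTheorem9:
  fixes lam alpha :: real
  assumes "0 \<le> lam" and "lam \<le> 1"
    and "1 \<le> alpha"
    and "alpha < (sqrt (lam\<^sup>2 - 2 * lam + 5) - lam + 1) / 2"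
  shows "\<exists>(N :: nat set) (M :: nat set) (k :: nat) (d :: nat \<Rightarrow> nat \<Rightarrow> real).
           finite N \<and> N \<noteq> {} \<and> finite M \<and> M \<noteq> {} \<and> 0 < k \<and>
           pseudometric_on (N \<union> M) d \<and>
           (\<forall>C X. \<not> in_alpha_core lam d N M k alpha C X)"
proof -
  have quad: "alpha\<^sup>2 + (lam - 1) * alpha < 1"
    using quadratic_bound_of_alpha_bound assms(1,3,4) .
  have lam: "lam < 1" using lam_less_one_of_quadratic_bound assms(3) quad .
  obtain t where t: "1 \<le> t" "alpha * (1 + lam * t) < lam + t" "alpha * (lam + t) < 2 + t - lam"
    using gadget_parameter_exists[OF assms(1) lam assms(3) quad] by blast
  define B where "B = (alpha * (2 + t) + 1) / (1 - lam)"
  interpret core_counterexample lam alpha t B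
  proof
    show "alpha * (2 + t) < (1 - lam) * B" using lam by (simp add: B_def)
  qed (use assms t in \<open>simp_all add: algebra_simps\<close>)
  show ?thesis
    using pseudometric not_in_alpha_core
    by (intro exI[of _ inst_agents] exI[of _ inst_centers] exI[of _ 3] exI[of _ d])
      (simp add: inst_agents_def inst_centers_def)
qed

end
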